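(* Let $\mathcal{G}$ be an undirected graph on $n$ nodes with symmetric nonnegative adjacency matrix $A=(a_{ij})\in\mathbb{R}^{n\times n}$ and degree matrix $D=\mathrm{diag}(d_1,\dots,d_n)$. Let $L_s=I-D^{-1/2}AD^{-1/2}$ be the symmetrically normalized graph Laplacian, with eigendecomposition $L_s=U\Lambda U^{-1}$, where $\Lambda=\mathrm{diag}(\lambda_1,\dots,\lambda_n)$ and $U=[\bm u_1,\dots,\bm u_n]$ is orthogonal. Let $p$ be a real function and $G=U\,\mathrm{diag}(p(\lambda_1),\dots,p(\lambda_n))\,U^{-1}$. If $p$ is nonincreasing and nonnegative on the set of eigenvalues $\{\lambda_1,\dots,\lambda_n\}$, then for any signal $\bm f\in\mathbb{R}^n$ with filtered signal $\bar{\bm f}=G\bm f$ (both nonzero), we have $$\Omega\!\left(\frac{\bar{\bm f}}{\|\bar{\bm f}\|_2}\right)\le \Omega\!\left(\frac{\bm f}{\|\bm f\|_2}\right),$$ where for $\bm g\in\mathbb{R}^n$, $\Omega(\bm g)=\frac12\sum_{(v_i,v_j)\in\mathcal{E}} a_{ij}\left\|\frac{\bm g(i)}{\sqrt{d_i}}-\frac{\bm g(j)}{\sqrt{d_j}}\right\|_2^2=\bm g^\top L_s\bm g$.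
   Context: A graph signal is a vector $\bm f\in\mathbb{R}^n$ assigning a real value to each node. A graph filter with frequency response function $p$ is the matrix $G=Up(\Lambda)U^{-1}$. $\Omega$ is the smoothness measure (Laplacian–Beltrami operator) given in the claim; $\mathcal{E}$ is the edge set. The eigenvalues of $L_s$ lie in $[0,2]$. *)

theory Defs
  imports "HOL-Analysis.Analysis"
begin

definition degree :: "real^'n^'n \<Rightarrow> 'n::finite \<Rightarrow> real" where
  "degree A i = (\<Sum>j\<in>UNIV. A $ i $ j)"

definition diag_mat :: "('n::finite \<Rightarrow> real) \<Rightarrow> real^'n^'n" where
  "diag_mat d = (\<chi> i j. if i = j then d i else 0)"

definition sym_laplacian :: "real^'n^'n \<Rightarrow> real^'n::finite^'n" where
  "sym_laplacian A =
     mat 1 - diag_mat (\<lambda>i. 1 / sqrt (degree A i)) ** A ** diag_mat (\<lambda>i. 1 / sqrt (degree A i))"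

definition edges :: "real^'n^'n \<Rightarrow> ('n::finite \<times> 'n) set" where
  "edges A = {(i, j). A $ i $ j \<noteq> 0}"

definition Omega :: "real^'n^'n \<Rightarrow> real^'n::finite \<Rightarrow> real" where
  "Omega A g = (1/2) * (\<Sum>(i, j)\<in>edges A.
      A $ i $ j * (g $ i / sqrt (degree A i) - g $ j / sqrt (degree A j))^2)"

end

theory Submission
  imports Defs
begin

text \<open>
  With \<open>L\<^sub>s = U diag(\<lambda>) U\<^sup>T\<close>, write \<open>f = U c\<close>; then \<open>G f = U (p(\<lambda>\<^sub>k) c\<^sub>k)\<^sub>k\<close>.
  Since \<open>\<Omega>(g) = g\<^sup>T L\<^sub>s g\<close> and \<open>U\<close> is orthogonal, \<open>\<Omega>(f/\<parallel>f\<parallel>)\<close> is the mean of the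
  eigenvalues \<open>\<lambda>\<^sub>k\<close> weighted by \<open>c\<^sub>k\<^sup>2\<close>, and \<open>\<Omega>(G f/\<parallel>G f\<parallel>)\<close> is the same mean for the
  weights \<open>p(\<lambda>\<^sub>k)\<^sup>2 c\<^sub>k\<^sup>2\<close>. As \<open>p\<^sup>2\<close> is nonincreasing in \<open>\<lambda>\<close>, the reweighting
  moves mass towards small eigenvalues, which by Chebyshev's sum inequality does
  not increase the mean.
\<close>

lemma Chebyshev_weighted_sum_upper:
  fixes l q w :: "'k \<Rightarrow> real"
  assumes "finite S" and w_nonneg: "\<And>k. k \<in> S \<Longrightarrow> w k \<ge> 0"
    and q_antimono: "\<And>k m. k \<in> S \<Longrightarrow> m \<in> S \<Longrightarrow> l k \<le> l m \<Longrightarrow> q m \<le> q k"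
  shows "(\<Sum>k\<in>S. l k * q k * w k) * (\<Sum>k\<in>S. w k)
         \<le> (\<Sum>k\<in>S. l k * w k) * (\<Sum>k\<in>S. q k * w k)"
proof -
  have opposite: "(l k - l m) * (q k - q m) \<le> 0" if "k \<in> S" "m \<in> S" for k m
    using q_antimono[OF that] q_antimono[OF that(2,1)]
    by (cases "l k \<le> l m") (auto simp: mult_le_0_iff)
  have "(\<Sum>k\<in>S. \<Sum>m\<in>S. w k * w m * ((l k - l m) * (q k - q m))) \<le> 0"
    by (intro sum_nonpos mult_nonneg_nonpos mult_nonneg_nonneg w_nonneg opposite)
  moreover have "(\<Sum>k\<in>S. \<Sum>m\<in>S. w k * w m * ((l k - l m) * (q k - q m)))
      = 2 * ((\<Sum>k\<in>S. l k * q k * w k) * (\<Sum>k\<in>S. w k))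
        - 2 * ((\<Sum>k\<in>S. l k * w k) * (\<Sum>k\<in>S. q k * w k))"
  proof -
    have expand: "w k * w m * ((l k - l m) * (q k - q m))
        = l k * q k * w k * w m + l m * q m * w m * w k
          - l k * w k * (q m * w m) - l m * w m * (q k * w k)" for k m
      by (simp add: algebra_simps)
    show ?thesis
      unfolding expand sum_subtractf sum.distrib
        sum.swap[of "\<lambda>k m. l m * q m * w m * w k"] sum.swap[of "\<lambda>k m. l m * w m * (q k * w k)"]
      by (simp add: sum_product)
  qed
  ultimately show ?thesis by simp
qed

lemma weighted_mean_antitone_reweight_le:
  fixes l q w :: "'k \<Rightarrow> real"
  assumes "finite S" and "\<And>k. k \<in> S \<Longrightarrow> w k \<ge> 0"
    and "\<And>k m. k \<in> S \<Longrightarrow> m \<in> S \<Longrightarrow> l k \<le> l m \<Longrightarrow> q m \<le> q k"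
    and "0 < (\<Sum>k\<in>S. w k)" and "0 < (\<Sum>k\<in>S. q k * w k)"
  shows "(\<Sum>k\<in>S. l k * q k * w k) / (\<Sum>k\<in>S. q k * w k) \<le> (\<Sum>k\<in>S. l k * w k) / (\<Sum>k\<in>S. w k)"
  using Chebyshev_weighted_sum_upper[OF assms(1-3)] assms(4,5)
  by (simp add: divide_le_eq le_divide_eq mult.commute mult.left_commute)

lemma norm_vec_power2: "(norm (y :: real^'n::finite))\<^sup>2 = (\<Sum>k\<in>UNIV. (y $ k)\<^sup>2)"
  unfolding power2_norm_eq_inner inner_vec_def by (simp add: power2_eq_square)

lemma diag_mat_mult_vector_nth: "(diag_mat d *v y) $ k = d k * y $ k"
  by (simp add: diag_mat_def matrix_vector_mult_def if_distrib if_distribR cong: if_cong)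

lemma diag_mat_matrix_mult_entry:
  "(diag_mat a ** M ** diag_mat b) $ i $ j = a i * M $ i $ j * b j"
  by (simp add: diag_mat_def matrix_matrix_mult_def if_distrib if_distribR cong: if_cong)

lemma sym_laplacian_entry:
  "sym_laplacian A $ i $ j
     = (if i = j then 1 else 0) - A $ i $ j / (sqrt (degree A i) * sqrt (degree A j))"
  unfolding sym_laplacian_def by (simp add: diag_mat_matrix_mult_entry mat_def)

lemma Omega_scaleR: "Omega A (c *\<^sub>R g) = c\<^sup>2 * Omega A g"
  unfolding Omega_def
  by (simp add: sum_distrib_left power2_eq_square algebra_simps case_prod_unfold)

lemma sum_square_differences_symmetric:
  fixes A :: "real^'n::finite^'n" and x :: "'n \<Rightarrow> real"
  assumes sym: "transpose A = A"
  shows "(1/2) * (\<Sum>(i, j)\<in>UNIV. A $ i $ j * (x i - x j)\<^sup>2)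
    = (\<Sum>i\<in>UNIV. degree A i * (x i)\<^sup>2) - (\<Sum>i\<in>UNIV. \<Sum>j\<in>UNIV. A $ i $ j * x i * x j)"
proof -
  have A_swap: "A $ j $ i = A $ i $ j" for i j
    using sym by (metis transpose_def vec_lambda_beta)
  have "(\<Sum>(i, j)\<in>UNIV. A $ i $ j * (x i - x j)\<^sup>2)
      = (\<Sum>i\<in>UNIV. \<Sum>j\<in>UNIV. A $ i $ j * (x i)\<^sup>2) + (\<Sum>i\<in>UNIV. \<Sum>j\<in>UNIV. A $ i $ j * (x j)\<^sup>2)
        - 2 * (\<Sum>i\<in>UNIV. \<Sum>j\<in>UNIV. A $ i $ j * x i * x j)"
    by (simp add: UNIV_Times_UNIV[symmetric] sum.cartesian_product[symmetric] power2_diff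
        algebra_simps sum.distrib sum_subtractf sum_distrib_left del: UNIV_Times_UNIV)
  also have "(\<Sum>i\<in>UNIV. \<Sum>j\<in>UNIV. A $ i $ j * (x j)\<^sup>2) = (\<Sum>i\<in>UNIV. \<Sum>j\<in>UNIV. A $ i $ j * (x i)\<^sup>2)"
    by (subst sum.swap) (simp add: A_swap)
  also have "(\<Sum>i\<in>UNIV. \<Sum>j\<in>UNIV. A $ i $ j * (x i)\<^sup>2) = (\<Sum>i\<in>UNIV. degree A i * (x i)\<^sup>2)"
    by (simp add: degree_def sum_distrib_right)
  finally show ?thesis by simp
qed

lemma Omega_eq_inner_sym_laplacian:
  fixes A :: "real^'n::finite^'n"
  assumes sym: "transpose A = A" and deg_pos: "\<And>i. degree A i > 0"
  shows "Omega A g = g \<bullet> (sym_laplacian A *v g)"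
proof -
  define x where "x i = g $ i / sqrt (degree A i)" for i
  have degree_x: "degree A i * (x i)\<^sup>2 = (g $ i)\<^sup>2" for i
    using deg_pos[of i] by (simp add: x_def power_divide)
  have "Omega A g = (1/2) * (\<Sum>(i, j)\<in>UNIV. A $ i $ j * (x i - x j)\<^sup>2)"
    unfolding Omega_def x_def
    by (intro arg_cong[where f="\<lambda>t. (1/2) * t"] sum.mono_neutral_left) (auto simp: edges_def)
  also have "\<dots> = (\<Sum>i\<in>UNIV. (g $ i)\<^sup>2) - (\<Sum>i\<in>UNIV. \<Sum>j\<in>UNIV. A $ i $ j * x i * x j)"
    unfolding sum_square_differences_symmetric[OF sym] degree_x ..
  also have "\<dots> = (\<Sum>i\<in>UNIV. \<Sum>j\<in>UNIV. (if i = j then g $ i * g $ j else 0) - A $ i $ j * x i * x j)"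
    by (simp add: sum_subtractf power2_eq_square)
  also have "\<dots> = g \<bullet> (sym_laplacian A *v g)"
    by (simp add: inner_vec_def matrix_vector_mult_def sym_laplacian_entry sum_distrib_left x_def
        algebra_simps if_distrib if_distribR cong: if_cong)
  finally show ?thesis .
qed

lemma orthogonal_matrix_inv_eq_transpose:
  fixes U :: "real^'n::finite^'n"
  assumes "orthogonal_matrix U"
  shows "matrix_inv U = transpose U"
proof -
  have "\<exists>V. U ** V = mat 1 \<and> V ** U = mat 1"
    using assms orthogonal_matrix_def by blast
  then have inv: "matrix_inv U ** U = mat 1"
    unfolding matrix_inv_def by (rule someI2_ex) blast
  have "matrix_inv U = matrix_inv U ** (U ** transpose U)"
    using assms by (simp add: orthogonal_matrix_def)
  also have "\<dots> = transpose U"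
    by (simp only: matrix_mul_assoc inv matrix_mul_lid)
  finally show ?thesis .
qed

lemma orthogonal_matrix_inner:
  fixes U :: "real^'n::finite^'n"
  assumes "orthogonal_matrix U"
  shows "(U *v x) \<bullet> (U *v y) = x \<bullet> y"
proof -
  have "(U *v x) \<bullet> (U *v y) = ((U *v x) v* U) \<bullet> y"
    by (simp add: dot_lmul_matrix)
  also have "(U *v x) v* U = transpose U *v (U *v x)"
    by (metis transpose_transpose vector_transpose_matrix)
  also have "transpose U *v (U *v x) = x"
    using assms by (simp add: matrix_vector_mul_assoc orthogonal_matrix_def)
  finally show ?thesis .
qed

lemma orthogonal_matrix_conjugate_mult_vector:
  fixes U M :: "real^'n::finite^'n"
  assumes "orthogonal_matrix U"
  shows "(U ** M ** transpose U) *v (U *v y) = U *v (M *v y)"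
proof -
  have "(U ** M ** transpose U) *v (U *v y) = (U ** M ** (transpose U ** U)) *v y"
    by (simp only: matrix_vector_mul_assoc matrix_mul_assoc)
  then show ?thesis
    using assms by (simp add: orthogonal_matrix_def matrix_vector_mul_assoc)
qed

lemma Omega_normalized_eigencoordinates:
  fixes A U :: "real^'n::finite^'n"
  assumes sym: "transpose A = A" and deg_pos: "\<And>i. degree A i > 0"
    and orth: "orthogonal_matrix U"
    and eig: "sym_laplacian A = U ** diag_mat lam ** matrix_inv U"
  shows "Omega A ((1 / norm (U *v y)) *\<^sub>R (U *v y))
    = (\<Sum>k\<in>UNIV. lam k * (y $ k)\<^sup>2) / (\<Sum>k\<in>UNIV. (y $ k)\<^sup>2)"
proof -
  have "Omega A (U *v y) = (U *v y) \<bullet> (U *v (diag_mat lam *v y))"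
    by (simp add: Omega_eq_inner_sym_laplacian[OF sym deg_pos] eig
        orthogonal_matrix_inv_eq_transpose[OF orth] orthogonal_matrix_conjugate_mult_vector[OF orth])
  also have "\<dots> = y \<bullet> (diag_mat lam *v y)"
    by (rule orthogonal_matrix_inner[OF orth])
  also have "\<dots> = (\<Sum>k\<in>UNIV. lam k * (y $ k)\<^sup>2)"
    by (simp add: inner_vec_def diag_mat_mult_vector_nth power2_eq_square algebra_simps)
  moreover have "(norm (U *v y))\<^sup>2 = (\<Sum>k\<in>UNIV. (y $ k)\<^sup>2)"
    by (simp add: power2_norm_eq_inner orthogonal_matrix_inner[OF orth] norm_vec_power2[symmetric])
  ultimately show ?thesis
    by (simp add: Omega_scaleR power_divide)
qed

theorem theorem1:
  fixes A U :: "real^'n::finite^'n"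
    and lam :: "'n \<Rightarrow> real"
    and p :: "real \<Rightarrow> real"
    and f :: "real^'n"
  assumes sym: "transpose A = A"
    and nonneg: "\<And>i j. A $ i $ j \<ge> 0"
    and deg_pos: "\<And>i. degree A i > 0"
    and orth: "orthogonal_matrix U"
    and eig: "sym_laplacian A = U ** diag_mat lam ** matrix_inv U"
    and p_noninc: "\<And>x y. x \<in> range lam \<Longrightarrow> y \<in> range lam \<Longrightarrow> x \<le> y \<Longrightarrow> p y \<le> p x"
    and p_nonneg: "\<And>x. x \<in> range lam \<Longrightarrow> p x \<ge> 0"
    and f_nz: "f \<noteq> 0"
    and fbar_nz: "(U ** diag_mat (p \<circ> lam) ** matrix_inv U) *v f \<noteq> 0"
  shows "Omega A ((1 / norm ((U ** diag_mat (p \<circ> lam) ** matrix_inv U) *v f))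
                    *\<^sub>R ((U ** diag_mat (p \<circ> lam) ** matrix_inv U) *v f))
         \<le> Omega A ((1 / norm f) *\<^sub>R f)"
proof -
  note Omega_spectral = Omega_normalized_eigencoordinates[OF sym deg_pos orth eig]
  have sum_squares_pos: "0 < (\<Sum>k\<in>UNIV. (y $ k)\<^sup>2)" if "U *v y \<noteq> 0" for y
    using that norm_vec_power2[of y]
    by (metis matrix_vector_mult_0_right zero_less_norm_iff zero_less_power)
  define c where "c = transpose U *v f"
  have "U ** transpose U = mat 1"
    using orth by (simp add: orthogonal_matrix_def)
  then have f_eq: "f = U *v c"
    unfolding c_def by (simp only: matrix_vector_mul_assoc matrix_vector_mul_lid)
  have Gf_eq: "(U ** diag_mat (p \<circ> lam) ** matrix_inv U) *v f = U *v (diag_mat (p \<circ> lam) *v c)"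
    by (simp add: f_eq orthogonal_matrix_inv_eq_transpose[OF orth]
        orthogonal_matrix_conjugate_mult_vector[OF orth])
  have p_sq_antimono: "(p (lam m))\<^sup>2 \<le> (p (lam k))\<^sup>2" if "lam k \<le> lam m" for k m
    using p_noninc[of "lam k" "lam m"] p_nonneg[of "lam m"] that by (simp add: power_mono)
  have "(\<Sum>k\<in>UNIV. lam k * (p (lam k))\<^sup>2 * (c $ k)\<^sup>2) / (\<Sum>k\<in>UNIV. (p (lam k))\<^sup>2 * (c $ k)\<^sup>2)
      \<le> (\<Sum>k\<in>UNIV. lam k * (c $ k)\<^sup>2) / (\<Sum>k\<in>UNIV. (c $ k)\<^sup>2)"
    using sum_squares_pos[of c] sum_squares_pos[of "diag_mat (p \<circ> lam) *v c"]
      f_nz[unfolded f_eq] fbar_nz[unfolded Gf_eq]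
    by (intro weighted_mean_antitone_reweight_le p_sq_antimono)
       (simp_all add: diag_mat_mult_vector_nth power_mult_distrib)
  then show ?thesis
    unfolding Gf_eq
    by (simp add: f_eq Omega_spectral diag_mat_mult_vector_nth power_mult_distrib mult.assoc)
qed

end
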